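(* Let $0\le k\le n$, let $A=(a_{i,j})\in\mathbb{R}^{n\times n}$ be a Monge matrix and $B=(b_{i,j})\in\mathbb{R}^{n\times n}$ an Anti-Monge matrix, and consider RecovAP with $c_1(\{u_i,v_j\})=a_{i,j}$ and $c_2(\{u_i,v_j\})=b_{i,j}$. Let $m=\lfloor\frac{n-k}{2}\rfloor$ and $I=\{1,\dots,m\}\cup\{n+1-m,\dots,n\}$. Then there exists an optimal solution $M_1,M_2$ such that (1) $\{u_i,v_i\}\in M_1$ for all $i\in I$; (2) $\{u_i,v_{n+1-i}\}\in M_2$ for all $i\in I$; (3) $M_1\cap M_2$ is an optimal solution of the assignment problem with cost $c_1+c_2$ (i.e. a minimum-cost perfect matching with respect to $c_1+c_2$) on the complete bipartite subgraph induced by $\{u_i: m+1\le i\le n-m\}$ and $\{v_i: m+1\le i\le n-m\}$.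
   Context: $K_{n,n}$ has vertex classes $U=\{u_1,\dots,u_n\}$, $V=\{v_1,\dots,v_n\}$. RecovAP: given $c_1,c_2:E(K_{n,n})\to\mathbb{R}$ and an integer $k$, find perfect matchings $M_1,M_2$ of $K_{n,n}$ with $|M_1\cap M_2|\ge k$ minimizing $c_1(M_1)+c_2(M_2)$; an optimal solution is a minimizing feasible pair. A matrix $A$ is Monge if $a_{i,j}+a_{k,l}\le a_{i,l}+a_{k,j}$ for all $i<k$, $j<l$; a matrix $B$ is Anti-Monge if $b_{i,j}+b_{k,l}\ge b_{i,l}+b_{k,j}$ for all $i<k$, $j<l$. *)

theory Defs
  imports Complex_Main
begin

text \<open>Vertices u_i and v_j of K_{n,n} are indexed by 1..n; an edge {u_i, v_j}
  is represented by the pair (i, j).  A cost function is a function on index pairs.\<close>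

definition perfect_matching_on :: "nat set \<Rightarrow> nat set \<Rightarrow> (nat \<times> nat) set \<Rightarrow> bool" where
  "perfect_matching_on S T M \<longleftrightarrow> M \<subseteq> S \<times> T \<and>
     (\<forall>i\<in>S. \<exists>!j. (i, j) \<in> M) \<and> (\<forall>j\<in>T. \<exists>!i. (i, j) \<in> M)"

abbreviation perfect_matching :: "nat \<Rightarrow> (nat \<times> nat) set \<Rightarrow> bool" where
  "perfect_matching n M \<equiv> perfect_matching_on {1..n} {1..n} M"

definition cost :: "(nat \<Rightarrow> nat \<Rightarrow> real) \<Rightarrow> (nat \<times> nat) set \<Rightarrow> real" where
  "cost c M = (\<Sum>(i, j)\<in>M. c i j)"

definition recov_feasible :: "nat \<Rightarrow> nat \<Rightarrow> (nat \<times> nat) set \<Rightarrow> (nat \<times> nat) set \<Rightarrow> bool" where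
  "recov_feasible n k M1 M2 \<longleftrightarrow>
     perfect_matching n M1 \<and> perfect_matching n M2 \<and> card (M1 \<inter> M2) \<ge> k"

definition recov_optimal :: "nat \<Rightarrow> nat \<Rightarrow> (nat \<Rightarrow> nat \<Rightarrow> real) \<Rightarrow> (nat \<Rightarrow> nat \<Rightarrow> real)
    \<Rightarrow> (nat \<times> nat) set \<Rightarrow> (nat \<times> nat) set \<Rightarrow> bool" where
  "recov_optimal n k c1 c2 M1 M2 \<longleftrightarrow> recov_feasible n k M1 M2 \<and>
     (\<forall>N1 N2. recov_feasible n k N1 N2 \<longrightarrow> cost c1 M1 + cost c2 M2 \<le> cost c1 N1 + cost c2 N2)"

definition optimal_assignment :: "nat set \<Rightarrow> nat set \<Rightarrow> (nat \<Rightarrow> nat \<Rightarrow> real) \<Rightarrow> (nat \<times> nat) set \<Rightarrow> bool" where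
  "optimal_assignment S T c M \<longleftrightarrow> perfect_matching_on S T M \<and>
     (\<forall>N. perfect_matching_on S T N \<longrightarrow> cost c M \<le> cost c N)"

definition monge :: "nat \<Rightarrow> (nat \<Rightarrow> nat \<Rightarrow> real) \<Rightarrow> bool" where
  "monge n a \<longleftrightarrow> (\<forall>i k j l. 1 \<le> i \<and> i < k \<and> k \<le> n \<and> 1 \<le> j \<and> j < l \<and> l \<le> n \<longrightarrow>
       a i j + a k l \<le> a i l + a k j)"

definition anti_monge :: "nat \<Rightarrow> (nat \<Rightarrow> nat \<Rightarrow> real) \<Rightarrow> bool" where
  "anti_monge n b \<longleftrightarrow> (\<forall>i k j l. 1 \<le> i \<and> i < k \<and> k \<le> n \<and> 1 \<le> j \<and> j < l \<and> l \<le> n \<longrightarrow>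
       b i j + b k l \<ge> b i l + b k j)"

end

(*
  Perfect matchings of K_{n,n} are graphs of permutations of {1..n}.  For a Monge cost, exchanging
  the columns of two rows that form an inversion never increases the cost; so rows R assigned to
  columns C can be rearranged at no cost to send Min R to Min C and Max R to Max C, and dually, for
  an Anti-Monge cost, to Max C and Min C.

  Take a feasible pair on the rows s..t with at least k common edges, where k + 2 <= t - s + 1, and
  call a common edge inner if it avoids the rows and columns s and t.  While fewer than k common
  edges are inner, pick a common edge x that is not, keep k - 1 further common edges including all
  inner ones, normalise both matchings on the remaining rows other than x, and rearrange the three
  rows x, Min, Max: their best Monge and best Anti-Monge assignments share the middle edge, which is
  inner.  With k inner common edges, normalising the other rows puts u_s v_s, u_t v_t into M1 and
  u_s v_t, u_t v_s into M2.  Peeling m layers in this way leaves at most k + 1 middle rows, on which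
  M1 and M2 coincide, so their common part is best chosen as an optimal assignment for a + b.
*)

theory Submission
  imports Defs "HOL-Combinatorics.Transposition"
begin

section \<open>Perfect matchings as bijections\<close>

definition graph :: "('a \<Rightarrow> 'b) \<Rightarrow> 'a set \<Rightarrow> ('a \<times> 'b) set" where
  "graph f S = (\<lambda>i. (i, f i)) ` S"

definition assign_cost :: "('a \<Rightarrow> 'b \<Rightarrow> real) \<Rightarrow> ('a \<Rightarrow> 'b) \<Rightarrow> 'a set \<Rightarrow> real" where
  "assign_cost c f S = (\<Sum>i\<in>S. c i (f i))"

definition common :: "('a \<Rightarrow> 'b) \<Rightarrow> ('a \<Rightarrow> 'b) \<Rightarrow> 'a set \<Rightarrow> 'a set" where
  "common f g S = {i\<in>S. f i = g i}"

lemma perfect_matching_on_graph: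
  assumes "bij_betw f S T"
  shows "perfect_matching_on S T (graph f S)"
  using assms unfolding perfect_matching_on_def graph_def bij_betw_def inj_on_def by auto

lemma perfect_matching_on_obtain_bij:
  assumes "perfect_matching_on S T M"
  obtains f where "bij_betw f S T" "M = graph f S"
proof
  have M: "M \<subseteq> S \<times> T" "\<forall>i\<in>S. \<exists>!j. (i, j) \<in> M" "\<forall>j\<in>T. \<exists>!i. (i, j) \<in> M"
    using assms unfolding perfect_matching_on_def by auto
  define f where "f i = (THE j. (i, j) \<in> M)" for i
  have fM: "(i, f i) \<in> M" if "i \<in> S" for i
    using M(2) that unfolding f_def by (metis theI')
  have fT: "f i \<in> T" if "i \<in> S" for i
    using fM[OF that] M(1) by auto
  show "M = graph f S"
    unfolding graph_def using M(1,2) fM by fastforce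
  have "inj_on f S"
  proof (rule inj_onI)
    fix i i' assume "i \<in> S" "i' \<in> S" "f i = f i'"
    then show "i = i'"
      using M(3) fM fT by metis
  qed
  moreover have "T \<subseteq> f ` S"
  proof
    fix j assume "j \<in> T"
    then obtain i where "(i, j) \<in> M"
      using M(3) by blast
    then show "j \<in> f ` S"
      using M(1,2) fM by (metis SigmaD1 image_eqI subsetD)
  qed
  ultimately show "bij_betw f S T"
    using fT unfolding bij_betw_def by blast
qed

lemma cost_graph: "cost c (graph f S) = assign_cost c f S"
  unfolding cost_def graph_def assign_cost_def by (simp add: sum.reindex inj_on_def)

lemma graph_Int_graph: "graph f S \<inter> graph g S = graph f (common f g S)"
  unfolding graph_def common_def by auto

lemma card_graph: "card (graph f S) = card S"
  unfolding graph_def by (rule card_image) (auto simp: inj_on_def)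

lemma optimal_assignment_exists:
  assumes "finite S" "bij_betw f S T"
  obtains M where "optimal_assignment S T c M"
proof
  let ?X = "{M. perfect_matching_on S T M}"
  have "finite T"
    using assms bij_betw_finite by blast
  then have "finite ?X"
    using assms(1) by (auto simp: perfect_matching_on_def intro: finite_subset[of _ "Pow (S \<times> T)"])
  moreover have "graph f S \<in> ?X"
    using perfect_matching_on_graph[OF assms(2)] by simp
  ultimately show "optimal_assignment S T c (arg_min_on (cost c) ?X)"
    unfolding optimal_assignment_def using arg_min_if_finite(1)[of ?X] arg_min_least[of ?X]
    by blast
qed

lemma bij_betw_modify:
  assumes "bij_betw f R C" "R' \<subseteq> R" "bij_betw g R' (f ` R')" "\<And>i. i \<in> R - R' \<Longrightarrow> g i = f i"
  shows "bij_betw g R C"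
proof -
  have "bij_betw g (R - R') (f ` (R - R'))"
    using bij_betw_subset[OF assms(1)] bij_betw_cong[of "R - R'" g f] assms(4) by auto
  moreover have "f ` R' \<inter> f ` (R - R') = {}"
    using assms(1,2) by (auto simp: bij_betw_def inj_on_def)
  ultimately have "bij_betw g (R' \<union> (R - R')) (f ` R' \<union> f ` (R - R'))"
    using bij_betw_combine[OF assms(3)] by blast
  moreover have "R' \<union> (R - R') = R" "f ` R' \<union> f ` (R - R') = C"
    using assms(1,2) by (auto simp: bij_betw_def)
  ultimately show ?thesis by simp
qed

lemma assign_cost_modify:
  assumes "finite S" "R \<subseteq> S" "\<And>i. i \<in> S - R \<Longrightarrow> g i = f i"
  shows "assign_cost c g S - assign_cost c f S = assign_cost c g R - assign_cost c f R"
proof -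
  have "assign_cost c h S = assign_cost c h R + (\<Sum>i\<in>S - R. c i (h i))" for h
    unfolding assign_cost_def using assms(1,2) by (metis add.commute sum.subset_diff)
  moreover have "(\<Sum>i\<in>S - R. c i (g i)) = (\<Sum>i\<in>S - R. c i (f i))"
    using assms(3) by simp
  ultimately show ?thesis by simp
qed

lemma assign_cost_le_modify:
  assumes "finite S" "R \<subseteq> S" "\<And>i. i \<in> S - R \<Longrightarrow> g i = f i" "assign_cost c g R \<le> assign_cost c f R"
  shows "assign_cost c g S \<le> assign_cost c f S"
  using assign_cost_modify[OF assms(1,2), of g f c] assms(3,4) by simp

lemma bij_betw_Diff_agree:
  assumes "bij_betw f1 S T" "bij_betw f2 S T" "D \<subseteq> S" "\<And>i. i \<in> D \<Longrightarrow> f1 i = f2 i"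
  shows "bij_betw f1 (S - D) (f1 ` (S - D))" "bij_betw f2 (S - D) (f1 ` (S - D))"
proof -
  have "f ` (S - D) = T - f ` D" if "bij_betw f S T" for f
    using that assms(3) inj_on_image_set_diff[of f S S D] by (auto simp: bij_betw_def)
  moreover have "f2 ` D = f1 ` D"
    using assms(4) by (auto simp: image_def)
  ultimately have "f2 ` (S - D) = f1 ` (S - D)"
    using assms(1,2) by metis
  then show "bij_betw f1 (S - D) (f1 ` (S - D))" "bij_betw f2 (S - D) (f1 ` (S - D))"
    using bij_betw_subset[OF assms(1), of "S - D"] bij_betw_subset[OF assms(2), of "S - D"] by auto
qed

lemma improve_outside_common:
  assumes "finite S" "bij_betw f1 S T" "bij_betw f2 S T" "D \<subseteq> S" "\<And>i. i \<in> D \<Longrightarrow> f1 i = f2 i"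
    and g: "bij_betw g1 (S - D) (f1 ` (S - D))" "bij_betw g2 (S - D) (f1 ` (S - D))"
      "\<And>i. i \<notin> S - D \<Longrightarrow> g1 i = f1 i" "\<And>i. i \<notin> S - D \<Longrightarrow> g2 i = f2 i"
      "assign_cost a g1 (S - D) \<le> assign_cost a f1 (S - D)" "assign_cost b g2 (S - D) \<le> assign_cost b f2 (S - D)"
  shows "bij_betw g1 S T" "bij_betw g2 S T" "D \<subseteq> common g1 g2 S"
    "assign_cost a g1 S \<le> assign_cost a f1 S" "assign_cost b g2 S \<le> assign_cost b f2 S"
proof -
  have "f2 ` (S - D) = f1 ` (S - D)"
    using bij_betw_Diff_agree(2)[OF assms(2-5)] by (simp add: bij_betw_def)
  then show "bij_betw g1 S T" "bij_betw g2 S T"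
    using bij_betw_modify[OF assms(2), of "S - D" g1] bij_betw_modify[OF assms(3), of "S - D" g2] g(1-4)
    by auto
  show "D \<subseteq> common g1 g2 S"
    using assms(4,5) g(3,4) unfolding common_def by auto
  show "assign_cost a g1 S \<le> assign_cost a f1 S" "assign_cost b g2 S \<le> assign_cost b f2 S"
    using assign_cost_le_modify[OF assms(1) Diff_subset, of D g1 f1 a]
      assign_cost_le_modify[OF assms(1) Diff_subset, of D g2 f2 b] g(3-6) by auto
qed

lemma assign_cost_swap:
  assumes "finite R" "i \<in> R" "j \<in> R" "i \<noteq> j"
  shows "assign_cost c (f \<circ> transpose i j) R + c i (f i) + c j (f j) =
    assign_cost c f R + c i (f j) + c j (f i)"
  using assign_cost_modify[OF assms(1), of "{i, j}" "f \<circ> transpose i j" f c] assms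
  by (simp add: assign_cost_def)

section \<open>Exchange arguments for Monge and Anti-Monge costs\<close>

definition monge_on :: "'a::linorder set \<Rightarrow> ('a \<Rightarrow> 'a \<Rightarrow> real) \<Rightarrow> bool" where
  "monge_on U a \<longleftrightarrow> (\<forall>i\<in>U. \<forall>k\<in>U. \<forall>j\<in>U. \<forall>l\<in>U. i < k \<longrightarrow> j < l \<longrightarrow> a i j + a k l \<le> a i l + a k j)"

definition anti_monge_on :: "'a::linorder set \<Rightarrow> ('a \<Rightarrow> 'a \<Rightarrow> real) \<Rightarrow> bool" where
  "anti_monge_on U b \<longleftrightarrow> (\<forall>i\<in>U. \<forall>k\<in>U. \<forall>j\<in>U. \<forall>l\<in>U. i < k \<longrightarrow> j < l \<longrightarrow> b i l + b k j \<le> b i j + b k l)"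

lemma monge_imp_monge_on: "monge n a \<Longrightarrow> monge_on {1..n} a"
  unfolding monge_def monge_on_def by auto

lemma anti_monge_imp_anti_monge_on: "anti_monge n b \<Longrightarrow> anti_monge_on {1..n} b"
  unfolding anti_monge_def anti_monge_on_def by auto

lemma monge_onD:
  assumes "monge_on U a" "i \<in> U" "k \<in> U" "j \<in> U" "l \<in> U" "i \<le> k" "j \<le> l"
  shows "a i j + a k l \<le> a i l + a k j"
proof (cases "i < k \<and> j < l")
  case True
  then show ?thesis
    using assms(1-5) unfolding monge_on_def by blast
next
  case False
  then have "i = k \<or> j = l"
    using assms(6,7) le_less by blast
  then show ?thesis
    by auto
qed

lemma anti_monge_onD:
  assumes "anti_monge_on U b" "i \<in> U" "k \<in> U" "j \<in> U" "l \<in> U" "i \<le> k" "j \<le> l"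
  shows "b i l + b k j \<le> b i j + b k l"
proof (cases "i < k \<and> j < l")
  case True
  then show ?thesis
    using assms(1-5) unfolding anti_monge_on_def by blast
next
  case False
  then have "i = k \<or> j = l"
    using assms(6,7) le_less by blast
  then show ?thesis
    by auto
qed

lemma swap_to_value:
  assumes "finite R" "bij_betw f R C" "p \<in> R" "v \<in> C"
    and better: "\<And>i. i \<in> R \<Longrightarrow> i \<noteq> p \<Longrightarrow> f i = v \<Longrightarrow> c p v + c i (f p) \<le> c p (f p) + c i v"
  obtains g where "bij_betw g R C" "g p = v" "\<And>i. i \<notin> R \<Longrightarrow> g i = f i"
    "\<And>i. i \<noteq> p \<Longrightarrow> f i \<noteq> v \<Longrightarrow> g i = f i" "assign_cost c g R \<le> assign_cost c f R"
proof -
  obtain q where q: "q \<in> R" "f q = v"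
    using assms(2,4) by (auto simp: bij_betw_def)
  show ?thesis
  proof (cases "q = p")
    case True
    show ?thesis
      by (rule that[of f]) (use q True assms(2) in auto)
  next
    case False
    have bij: "bij_betw (f \<circ> transpose p q) R C"
      by (rule bij_betw_trans[OF _ assms(2)]) (simp add: assms(3) q(1))
    have cost: "assign_cost c (f \<circ> transpose p q) R \<le> assign_cost c f R"
      using assign_cost_swap[OF assms(1,3) q(1), of c f] better[OF q(1)] False q(2) by simp
    show ?thesis
      by (rule that[OF bij _ _ _ cost]) (use q assms(3) in \<open>auto simp: transpose_def\<close>)
  qed
qed

text \<open>The hypotheses say that transposing the value \<open>lo\<close> into row \<open>Min R\<close>, and then \<open>hi\<close> into
  row \<open>Max R\<close>, does not increase the cost.\<close>

lemma normalize_ends: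
  assumes "finite R" "bij_betw f R C" "lo \<in> C" "hi \<in> C" "lo \<noteq> hi"
    and lo_better: "\<And>i j. i \<in> R \<Longrightarrow> j \<in> C \<Longrightarrow> c (Min R) lo + c i j \<le> c (Min R) j + c i lo"
    and hi_better: "\<And>i j. i \<in> R \<Longrightarrow> j \<in> C \<Longrightarrow> c i j + c (Max R) hi \<le> c i hi + c (Max R) j"
  obtains g where "bij_betw g R C" "\<And>i. i \<notin> R \<Longrightarrow> g i = f i" "g (Min R) = lo" "g (Max R) = hi"
    "assign_cost c g R \<le> assign_cost c f R"
proof -
  have "R \<noteq> {}"
    using assms(2,3) by (auto simp: bij_betw_def)
  then have ends: "Min R \<in> R" "Max R \<in> R" "\<And>i. i \<in> R \<Longrightarrow> Min R \<le> i \<and> i \<le> Max R"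
    using assms(1) by auto
  have fC: "f i \<in> C" if "i \<in> R" for i
    using that assms(2) by (auto simp: bij_betw_def)
  have lo_swap: "c (Min R) lo + c i (f (Min R)) \<le> c (Min R) (f (Min R)) + c i lo" if "i \<in> R" for i
    using lo_better[OF that fC[OF ends(1)]] by simp
  obtain f1 where f1: "bij_betw f1 R C" "f1 (Min R) = lo" "\<And>i. i \<notin> R \<Longrightarrow> f1 i = f i"
    "\<And>i. i \<noteq> Min R \<Longrightarrow> f i \<noteq> lo \<Longrightarrow> f1 i = f i" "assign_cost c f1 R \<le> assign_cost c f R"
    by (rule swap_to_value[OF assms(1,2) ends(1) assms(3), where c = c])
      (rule lo_swap, assumption, blast)
  have f1C: "f1 i \<in> C" if "i \<in> R" for i
    using that f1(1) by (auto simp: bij_betw_def)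
  have hi_swap: "c (Max R) hi + c i (f1 (Max R)) \<le> c (Max R) (f1 (Max R)) + c i hi" if "i \<in> R" for i
    using hi_better[OF that f1C[OF ends(2)]] by simp
  obtain g where g: "bij_betw g R C" "g (Max R) = hi" "\<And>i. i \<notin> R \<Longrightarrow> g i = f1 i"
    "\<And>i. i \<noteq> Max R \<Longrightarrow> f1 i \<noteq> hi \<Longrightarrow> g i = f1 i" "assign_cost c g R \<le> assign_cost c f1 R"
    by (rule swap_to_value[OF assms(1) f1(1) ends(2) assms(4), where c = c])
      (rule hi_swap, assumption, blast)
  have "Min R \<noteq> Max R"
  proof
    assume "Min R = Max R"
    then have "R = {Min R}"
      using ends by force
    then obtain r where "R = {r}"
      by blast
    then show False
      using assms(2-5) by (auto simp: bij_betw_def)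
  qed
  then have "g (Min R) = lo"
    using g(4) f1(2) assms(5) by simp
  then show ?thesis
    using g(3,5) f1(3,5) by (intro that[OF g(1) _ _ g(2)]) auto
qed

lemma Min_less_Max:
  fixes C :: "'a::linorder set"
  assumes "finite C" "2 \<le> card C"
  shows "Min C < Max C"
proof (rule ccontr)
  assume "\<not> Min C < Max C"
  have "x = Min C" if "x \<in> C" for x
    using Min_le[OF assms(1) that] Max_ge[OF assms(1) that] \<open>\<not> Min C < Max C\<close>
    by (meson dual_order.antisym dual_order.trans not_less)
  then have "C \<subseteq> {Min C}"
    by blast
  then have "card C \<le> card {Min C}"
    by (rule card_mono[rotated]) simp
  then show False
    using assms(2) by simp
qed

lemma monge_on_normalize:
  assumes "monge_on U a" "finite R" "R \<subseteq> U" "C \<subseteq> U" "bij_betw f R C" "2 \<le> card R"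
  obtains g where "bij_betw g R C" "\<And>i. i \<notin> R \<Longrightarrow> g i = f i" "g (Min R) = Min C" "g (Max R) = Max C"
    "assign_cost a g R \<le> assign_cost a f R"
proof (rule normalize_ends[OF assms(2,5)])
  have C: "finite C" "2 \<le> card C"
    using assms(2,6) bij_betw_finite[OF assms(5)] bij_betw_same_card[OF assms(5)] by auto
  then have "C \<noteq> {}" "R \<noteq> {}"
    using assms(6) by auto
  then have ends: "Min R \<in> R" "Max R \<in> R" "Min C \<in> C" "Max C \<in> C"
    using assms(2) C(1) by simp_all
  then show "Min C \<in> C" "Max C \<in> C" "Min C \<noteq> Max C"
    using Min_less_Max[OF C] by auto
  show "a (Min R) (Min C) + a i j \<le> a (Min R) j + a i (Min C)"
    and "a i j + a (Max R) (Max C) \<le> a i (Max C) + a (Max R) j"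
    if "i \<in> R" "j \<in> C" for i j
    using monge_onD[OF assms(1), of "Min R" i "Min C" j] monge_onD[OF assms(1), of i "Max R" j "Max C"]
      that ends assms(2-4) C(1) by auto
qed blast

lemma anti_monge_on_normalize:
  assumes "anti_monge_on U b" "finite R" "R \<subseteq> U" "C \<subseteq> U" "bij_betw f R C" "2 \<le> card R"
  obtains g where "bij_betw g R C" "\<And>i. i \<notin> R \<Longrightarrow> g i = f i" "g (Min R) = Max C" "g (Max R) = Min C"
    "assign_cost b g R \<le> assign_cost b f R"
proof (rule normalize_ends[OF assms(2,5)])
  have C: "finite C" "2 \<le> card C"
    using assms(2,6) bij_betw_finite[OF assms(5)] bij_betw_same_card[OF assms(5)] by auto
  then have "C \<noteq> {}" "R \<noteq> {}"
    using assms(6) by auto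
  then have ends: "Min R \<in> R" "Max R \<in> R" "Min C \<in> C" "Max C \<in> C"
    using assms(2) C(1) by simp_all
  then show "Max C \<in> C" "Min C \<in> C" "Max C \<noteq> Min C"
    using Min_less_Max[OF C] by auto
  show "b (Min R) (Max C) + b i j \<le> b (Min R) j + b i (Max C)"
    and "b i j + b (Max R) (Min C) \<le> b i (Min C) + b (Max R) j"
    if "i \<in> R" "j \<in> C" for i j
    using anti_monge_onD[OF assms(1), of "Min R" i j "Max C"] anti_monge_onD[OF assms(1), of i "Max R" "Min C" j]
      that ends assms(2-4) C(1) by auto
qed blast

lemma card_3_obtain_sorted:
  fixes T :: "'a::linorder set"
  assumes "card T = 3"
  obtains p q r where "T = {p, q, r}" "p < q" "q < r"
proof -
  obtain x y z where T: "T = {x, y, z}" "x \<noteq> y" "y \<noteq> z" "x \<noteq> z"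
    using assms unfolding card_3_iff by blast
  then show ?thesis
    using that by (cases x y rule: linorder_cases; cases y z rule: linorder_cases;
        cases x z rule: linorder_cases) (auto simp: insert_commute)
qed

text \<open>On three rows mapped onto three columns, the best Monge assignment is increasing and the best
  Anti-Monge assignment is decreasing; both send the middle row to the middle column.\<close>

lemma three_rows_common_middle:
  assumes "monge_on U a" "anti_monge_on U b" "T \<subseteq> U" "T' \<subseteq> U" "card T = 3"
    "bij_betw f1 T T'" "bij_betw f2 T T'"
  obtains g1 g2 y where "bij_betw g1 T T'" "bij_betw g2 T T'"
    "\<And>i. i \<notin> T \<Longrightarrow> g1 i = f1 i" "\<And>i. i \<notin> T \<Longrightarrow> g2 i = f2 i"
    "y \<in> T" "Min T < y" "y < Max T" "g1 y = g2 y" "Min T' < g1 y" "g1 y < Max T'"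
    "assign_cost a g1 T \<le> assign_cost a f1 T" "assign_cost b g2 T \<le> assign_cost b f2 T"
proof -
  have fin: "finite T"
    using assms(5) card.infinite by fastforce
  obtain g1 where g1: "bij_betw g1 T T'" "\<And>i. i \<notin> T \<Longrightarrow> g1 i = f1 i" "g1 (Min T) = Min T'"
    "g1 (Max T) = Max T'" "assign_cost a g1 T \<le> assign_cost a f1 T"
    using monge_on_normalize[OF assms(1) fin assms(3,4,6)] assms(5) by auto
  obtain g2 where g2: "bij_betw g2 T T'" "\<And>i. i \<notin> T \<Longrightarrow> g2 i = f2 i" "g2 (Min T) = Max T'"
    "g2 (Max T) = Min T'" "assign_cost b g2 T \<le> assign_cost b f2 T"
    using anti_monge_on_normalize[OF assms(2) fin assms(3,4,7)] assms(5) by auto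
  obtain p q r where T: "T = {p, q, r}" "p < q" "q < r"
    using card_3_obtain_sorted[OF assms(5)] by blast
  obtain p' q' r' where T': "T' = {p', q', r'}" "p' < q'" "q' < r'"
    using card_3_obtain_sorted assms(5,6) bij_betw_same_card by metis
  have ends: "Min T = p" "Max T = r" "Min T' = p'" "Max T' = r'"
    using T T' by auto
  have "g1 q = q'" "g2 q = q'"
    using g1(1,3,4) g2(1,3,4) T T' unfolding ends by (auto simp: bij_betw_def inj_on_def)
  then show ?thesis
    using that[OF g1(1) g2(1) g1(2) g2(2), of q] g1(5) g2(5) T T' ends by auto
qed

text \<open>Normalizing the rows other than \<open>x\<close> makes both bijections map the rows \<open>x\<close>, \<open>Min R0\<close>,
  \<open>Max R0\<close> onto the columns \<open>f1 x\<close>, \<open>Min C0\<close>, \<open>Max C0\<close>.\<close>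

lemma three_rows_same_image:
  assumes "monge_on U a" "anti_monge_on U b" "finite R" "R \<subseteq> U" "C \<subseteq> U"
    "bij_betw f1 R C" "bij_betw f2 R C" "x \<in> R" "f1 x = f2 x" "3 \<le> card R"
  obtains h1 h2 T where "bij_betw h1 R C" "bij_betw h2 R C"
    "\<And>i. i \<notin> R \<Longrightarrow> h1 i = f1 i" "\<And>i. i \<notin> R \<Longrightarrow> h2 i = f2 i"
    "assign_cost a h1 R \<le> assign_cost a f1 R" "assign_cost b h2 R \<le> assign_cost b f2 R"
    "T \<subseteq> R" "card T = 3" "h2 ` T = h1 ` T"
proof -
  define R0 where "R0 = R - {x}"
  define C0 where "C0 = f1 ` R0"
  have R0: "finite R0" "R0 \<subseteq> R" "x \<notin> R0" "2 \<le> card R0"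
    using assms(3,8,10) unfolding R0_def by auto
  have U: "R0 \<subseteq> U" "C0 \<subseteq> U"
    using R0(2) assms(4-6) unfolding C0_def bij_betw_def by auto
  have x: "{x} \<subseteq> R" "\<And>i. i \<in> {x} \<Longrightarrow> f1 i = f2 i"
    using assms(8,9) by auto
  note b0 = bij_betw_Diff_agree[OF assms(6,7) x, folded R0_def, folded C0_def]
  obtain h1 where h1: "bij_betw h1 R0 C0" "\<And>i. i \<notin> R0 \<Longrightarrow> h1 i = f1 i"
    "h1 (Min R0) = Min C0" "h1 (Max R0) = Max C0" "assign_cost a h1 R0 \<le> assign_cost a f1 R0"
    using monge_on_normalize[OF assms(1) R0(1) U b0(1) R0(4)] by blast
  obtain h2 where h2: "bij_betw h2 R0 C0" "\<And>i. i \<notin> R0 \<Longrightarrow> h2 i = f2 i"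
    "h2 (Min R0) = Max C0" "h2 (Max R0) = Min C0" "assign_cost b h2 R0 \<le> assign_cost b f2 R0"
    using anti_monge_on_normalize[OF assms(2) R0(1) U b0(2) R0(4)] by blast
  have h: "bij_betw h1 R C" "bij_betw h2 R C"
    "assign_cost a h1 R \<le> assign_cost a f1 R" "assign_cost b h2 R \<le> assign_cost b f2 R"
    using improve_outside_common[OF assms(3,6,7) x, of h1 h2 a b] h1(1,2,5) h2(1,2,5)
    unfolding R0_def C0_def by blast+
  have "R0 \<noteq> {}"
    using R0(4) by auto
  then have "Min R0 \<in> R0" "Max R0 \<in> R0" "Min R0 < Max R0"
    using R0(1) Min_less_Max[OF R0(1,4)] by simp_all
  moreover have "x \<noteq> Min R0" "x \<noteq> Max R0"
    using R0(3) \<open>Min R0 \<in> R0\<close> \<open>Max R0 \<in> R0\<close> by auto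
  ultimately have "{x, Min R0, Max R0} \<subseteq> R" "card {x, Min R0, Max R0} = 3"
    using R0(2) assms(8) by auto
  moreover have "h2 ` {x, Min R0, Max R0} = h1 ` {x, Min R0, Max R0}"
    using assms(9) h1(2-4) h2(2-4) R0(3) by auto
  moreover have "h1 i = f1 i" "h2 i = f2 i" if "i \<notin> R" for i
    using that h1(2) h2(2) R0(2) by auto
  ultimately show ?thesis
    using that[OF h(1,2) _ _ h(3,4)] by blast
qed

lemma interior_common_point:
  assumes "monge_on U a" "anti_monge_on U b" "finite R" "R \<subseteq> U" "C \<subseteq> U"
    "bij_betw f1 R C" "bij_betw f2 R C" "x \<in> R" "f1 x = f2 x" "3 \<le> card R"
  obtains g1 g2 y where "bij_betw g1 R C" "bij_betw g2 R C"
    "\<And>i. i \<notin> R \<Longrightarrow> g1 i = f1 i" "\<And>i. i \<notin> R \<Longrightarrow> g2 i = f2 i"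
    "y \<in> R" "Min R < y" "y < Max R" "g1 y = g2 y" "Min C < g1 y" "g1 y < Max C"
    "assign_cost a g1 R \<le> assign_cost a f1 R" "assign_cost b g2 R \<le> assign_cost b f2 R"
proof -
  obtain h1 h2 T where h: "bij_betw h1 R C" "bij_betw h2 R C"
    "\<And>i. i \<notin> R \<Longrightarrow> h1 i = f1 i" "\<And>i. i \<notin> R \<Longrightarrow> h2 i = f2 i"
    "assign_cost a h1 R \<le> assign_cost a f1 R" "assign_cost b h2 R \<le> assign_cost b f2 R"
    "T \<subseteq> R" "card T = 3" "h2 ` T = h1 ` T"
    using three_rows_same_image[OF assms] by blast
  define T' where "T' = h1 ` T"
  have T: "bij_betw h1 T T'" "bij_betw h2 T T'" "T' \<subseteq> C"
    using bij_betw_subset[OF h(1,7)] bij_betw_subset[OF h(2,7)] h(1,7,9) unfolding T'_def bij_betw_def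
    by auto
  then have "T \<subseteq> U" "T' \<subseteq> U"
    using h(7) assms(4,5) by auto
  then obtain g1 g2 y where g: "bij_betw g1 T T'" "bij_betw g2 T T'"
    "\<And>i. i \<notin> T \<Longrightarrow> g1 i = h1 i" "\<And>i. i \<notin> T \<Longrightarrow> g2 i = h2 i"
    "y \<in> T" "Min T < y" "y < Max T" "g1 y = g2 y" "Min T' < g1 y" "g1 y < Max T'"
    "assign_cost a g1 T \<le> assign_cost a h1 T" "assign_cost b g2 T \<le> assign_cost b h2 T"
    using three_rows_common_middle[OF assms(1,2) _ _ h(8) T(1,2)] by blast
  have "T \<noteq> {}" "T' \<noteq> {}" "finite C"
    using h(8) assms(3) bij_betw_finite[OF assms(6)] unfolding T'_def by auto
  then have "Min R \<le> Min T" "Max T \<le> Max R" "Min C \<le> Min T'" "Max T' \<le> Max C"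
    using h(7) T(3) assms(3) by (simp_all add: Min_antimono Max_mono)
  show ?thesis
  proof (rule that)
    show "bij_betw g1 R C" "bij_betw g2 R C"
      using bij_betw_modify[OF h(1,7), of g1] bij_betw_modify[OF h(2,7), of g2] g(1-4) h(9)
      unfolding T'_def by auto
    show "g1 i = f1 i" "g2 i = f2 i" if "i \<notin> R" for i
    proof -
      have "i \<notin> T"
        using that h(7) by auto
      then show "g1 i = f1 i" "g2 i = f2 i"
        using that h(3,4) g(3,4) by simp_all
    qed
    show "assign_cost a g1 R \<le> assign_cost a f1 R" "assign_cost b g2 R \<le> assign_cost b f2 R"
      using assign_cost_le_modify[OF assms(3) h(7), of g1 h1 a] assign_cost_le_modify[OF assms(3) h(7), of g2 h2 b]
        g(3,4,11,12) h(5,6) by fastforce+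
  qed (use g(5-10) h(7) \<open>Min R \<le> Min T\<close> \<open>Max T \<le> Max R\<close> \<open>Min C \<le> Min T'\<close> \<open>Max T' \<le> Max C\<close>
      in auto)
qed

section \<open>Peeling the outer rows\<close>

definition inner_common :: "nat \<Rightarrow> nat \<Rightarrow> (nat \<Rightarrow> nat) \<Rightarrow> (nat \<Rightarrow> nat) \<Rightarrow> nat set" where
  "inner_common s t f g = {i \<in> common f g {s..t}. s < i \<and> i < t \<and> s < f i \<and> f i < t}"

lemma finite_common [simp]: "finite S \<Longrightarrow> finite (common f g S)"
  unfolding common_def by simp

lemma inner_common_subset: "inner_common s t f g \<subseteq> common f g {s..t}"
  unfolding inner_common_def by blast

lemma fix_ends_if_inner_common:
  assumes "monge_on U a" "anti_monge_on U b" "{s..t} \<subseteq> U" "s < t"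
    "bij_betw f1 {s..t} {s..t}" "bij_betw f2 {s..t} {s..t}" "k \<le> card (inner_common s t f1 f2)"
  obtains g1 g2 where "bij_betw g1 {s..t} {s..t}" "bij_betw g2 {s..t} {s..t}"
    "k \<le> card (common g1 g2 {s..t})" "g1 s = s" "g1 t = t" "g2 s = t" "g2 t = s"
    "assign_cost a g1 {s..t} \<le> assign_cost a f1 {s..t}" "assign_cost b g2 {s..t} \<le> assign_cost b f2 {s..t}"
proof -
  define D where "D = inner_common s t f1 f2"
  define R where "R = {s..t} - D"
  define C where "C = f1 ` R"
  have D: "D \<subseteq> {s..t}" "\<And>i. i \<in> D \<Longrightarrow> f1 i = f2 i" "s \<notin> f1 ` D" "t \<notin> f1 ` D" "s \<notin> D" "t \<notin> D"
    unfolding D_def inner_common_def common_def by auto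
  note b = bij_betw_Diff_agree[OF assms(5,6) D(1,2), folded R_def, folded C_def]
  have "C = {s..t} - f1 ` D"
    using inj_on_image_set_diff[of f1 "{s..t}" "{s..t}" D] assms(5) D(1)
    unfolding C_def R_def bij_betw_def by auto
  then have RC: "R \<subseteq> {s..t}" "C \<subseteq> {s..t}" "s \<in> R" "t \<in> R" "s \<in> C" "t \<in> C"
    using assms(4) D(3-6) unfolding R_def by auto
  then have ends: "Min R = s" "Max R = t" "Min C = s" "Max C = t"
    by (auto intro!: Min_eqI Max_eqI intro: finite_subset)
  have R: "finite R" "2 \<le> card R" "R \<subseteq> U" "C \<subseteq> U"
    using RC assms(3,4) card_mono[of R "{s, t}"] unfolding R_def by auto
  obtain g1 where g1: "bij_betw g1 R C" "\<And>i. i \<notin> R \<Longrightarrow> g1 i = f1 i" "g1 s = s" "g1 t = t"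
    "assign_cost a g1 R \<le> assign_cost a f1 R"
    using monge_on_normalize[OF assms(1) R(1,3,4) b(1) R(2)] unfolding ends by blast
  obtain g2 where g2: "bij_betw g2 R C" "\<And>i. i \<notin> R \<Longrightarrow> g2 i = f2 i" "g2 s = t" "g2 t = s"
    "assign_cost b g2 R \<le> assign_cost b f2 R"
    using anti_monge_on_normalize[OF assms(2) R(1,3,4) b(2) R(2)] unfolding ends by blast
  have g: "bij_betw g1 {s..t} {s..t}" "bij_betw g2 {s..t} {s..t}" "D \<subseteq> common g1 g2 {s..t}"
    "assign_cost a g1 {s..t} \<le> assign_cost a f1 {s..t}" "assign_cost b g2 {s..t} \<le> assign_cost b f2 {s..t}"
    using improve_outside_common[OF finite_atLeastAtMost assms(5,6) D(1,2), of g1 g2 a b] g1(1,2,5) g2(1,2,5)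
    unfolding R_def C_def by blast+
  have "k \<le> card (common g1 g2 {s..t})"
    using assms(7) g(3) card_mono[of "common g1 g2 {s..t}" D] unfolding D_def by simp
  then show ?thesis
    using that[OF g(1,2)] g1(3,4) g2(3,4) g(4,5) by blast
qed

lemma exists_insert_subset_between:
  assumes "finite A" "G \<subseteq> A" "card G < k" "k \<le> card A"
  obtains x E where "x \<in> A" "x \<notin> G" "insert x G \<subseteq> E" "E \<subseteq> A" "card E = k"
proof -
  have "\<not> A \<subseteq> G"
  proof
    assume "A \<subseteq> G"
    then have "card A \<le> card G"
      using card_mono finite_subset[OF assms(2,1)] by blast
    then show False
      using assms(3,4) by simp
  qed
  then obtain x where x: "x \<in> A" "x \<notin> G"
    by blast
  moreover have "card (insert x G) \<le> k"
    using x(2) finite_subset[OF assms(2,1)] assms(3) by simp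
  ultimately show ?thesis
    using exists_subset_between[of "insert x G" k A] assms(1,2,4) that by auto
qed

text \<open>Some common edge \<open>x\<close> is not inner.  Keeping \<open>k - 1\<close> common edges that include all inner
  ones, \<open>interior_common_point\<close> turns \<open>x\<close> into an inner common edge on the remaining rows.\<close>

lemma inner_common_grow:
  assumes "monge_on U a" "anti_monge_on U b" "{s..t} \<subseteq> U"
    "bij_betw f1 {s..t} {s..t}" "bij_betw f2 {s..t} {s..t}" "card (inner_common s t f1 f2) < k"
    "k \<le> card (common f1 f2 {s..t})" "k + 2 \<le> card {s..t}"
  obtains g1 g2 where "bij_betw g1 {s..t} {s..t}" "bij_betw g2 {s..t} {s..t}"
    "k \<le> card (common g1 g2 {s..t})" "card (inner_common s t f1 f2) < card (inner_common s t g1 g2)"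
    "assign_cost a g1 {s..t} \<le> assign_cost a f1 {s..t}" "assign_cost b g2 {s..t} \<le> assign_cost b f2 {s..t}"
proof -
  define G where "G = inner_common s t f1 f2"
  obtain x E where x: "x \<in> common f1 f2 {s..t}" "x \<notin> G"
    and E: "insert x G \<subseteq> E" "E \<subseteq> common f1 f2 {s..t}" "card E = k"
    using exists_insert_subset_between[OF _ inner_common_subset assms(6,7)] unfolding G_def by auto
  define D where "D = E - {x}"
  define R where "R = {s..t} - D"
  define C where "C = f1 ` R"
  have D: "D \<subseteq> {s..t}" "\<And>i. i \<in> D \<Longrightarrow> f1 i = f2 i" "G \<subseteq> D" "card D + 1 = k"
    using E x finite_subset[OF E(2)] card_gt_0_iff[of E] unfolding D_def common_def by auto
  note b = bij_betw_Diff_agree[OF assms(4,5) D(1,2), folded R_def, folded C_def]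
  have R: "finite R" "R \<subseteq> {s..t}" "R \<subseteq> U" "C \<subseteq> U" "x \<in> R" "3 \<le> card R"
    using assms(3,4,8) x D(1,4) card_Diff_subset[OF finite_subset[OF D(1)] D(1)]
    unfolding R_def C_def D_def common_def bij_betw_def by auto
  obtain g1 g2 y where g: "bij_betw g1 R C" "bij_betw g2 R C"
    "\<And>i. i \<notin> R \<Longrightarrow> g1 i = f1 i" "\<And>i. i \<notin> R \<Longrightarrow> g2 i = f2 i"
    "y \<in> R" "Min R < y" "y < Max R" "g1 y = g2 y" "Min C < g1 y" "g1 y < Max C"
    "assign_cost a g1 R \<le> assign_cost a f1 R" "assign_cost b g2 R \<le> assign_cost b f2 R"
    using interior_common_point[OF assms(1,2) R(1,3,4) b R(5)] x(1) R(6) unfolding common_def by blast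
  have h: "bij_betw g1 {s..t} {s..t}" "bij_betw g2 {s..t} {s..t}" "D \<subseteq> common g1 g2 {s..t}"
    "assign_cost a g1 {s..t} \<le> assign_cost a f1 {s..t}" "assign_cost b g2 {s..t} \<le> assign_cost b f2 {s..t}"
    using improve_outside_common[OF finite_atLeastAtMost assms(4,5) D(1,2), of g1 g2 a b] g(1-4,11,12)
    unfolding R_def C_def by blast+
  have "R \<noteq> {}" "C \<noteq> {}" "C \<subseteq> {s..t}"
    using R(2,5) assms(4) unfolding C_def bij_betw_def by auto
  then have "Min R \<in> {s..t}" "Max R \<in> {s..t}" "Min C \<in> {s..t}" "Max C \<in> {s..t}"
    using R(1,2) finite_subset[of C "{s..t}"] Min_in Max_in by blast+
  then have y: "y \<in> inner_common s t g1 g2" "y \<notin> D"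
    using g(5-10) R(2) unfolding inner_common_def common_def R_def by auto
  have "G \<subseteq> inner_common s t g1 g2"
    using D(3) g(3,4) unfolding G_def inner_common_def common_def R_def by auto
  then have "G \<subset> inner_common s t g1 g2"
    using y D(3) by auto
  then have "card G < card (inner_common s t g1 g2)"
    using finite_subset[OF inner_common_subset] by (simp add: psubset_card_mono)
  moreover have "k \<le> card (common g1 g2 {s..t})"
    using y h(3) D(4) card_mono[of "common g1 g2 {s..t}" "insert y D"] finite_subset[OF D(1)]
      inner_common_subset by fastforce
  ultimately show ?thesis
    using that[OF h(1,2)] h(4,5) unfolding G_def by blast
qed

lemma peel_outer_layer:
  fixes s t :: nat
  assumes "monge_on U a" "anti_monge_on U b" "{s..t} \<subseteq> U" "k + 2 \<le> card {s..t}"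
    "bij_betw f1 {s..t} {s..t}" "bij_betw f2 {s..t} {s..t}" "k \<le> card (common f1 f2 {s..t})"
  obtains g1 g2 where "bij_betw g1 {s..t} {s..t}" "bij_betw g2 {s..t} {s..t}"
    "k \<le> card (common g1 g2 {s..t})" "g1 s = s" "g1 t = t" "g2 s = t" "g2 t = s"
    "assign_cost a g1 {s..t} \<le> assign_cost a f1 {s..t}" "assign_cost b g2 {s..t} \<le> assign_cost b f2 {s..t}"
proof -
  have "s < t"
    using assms(4) by simp
  have "\<exists>g1 g2. bij_betw g1 {s..t} {s..t} \<and> bij_betw g2 {s..t} {s..t} \<and>
      k \<le> card (common g1 g2 {s..t}) \<and> g1 s = s \<and> g1 t = t \<and> g2 s = t \<and> g2 t = s \<and>
      assign_cost a g1 {s..t} \<le> assign_cost a f1 {s..t} \<and> assign_cost b g2 {s..t} \<le> assign_cost b f2 {s..t}"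
    using assms(5-7)
  proof (induction "k - card (inner_common s t f1 f2)" arbitrary: f1 f2 rule: less_induct)
    case less
    show ?case
    proof (cases "k \<le> card (inner_common s t f1 f2)")
      case True
      show ?thesis
        using fix_ends_if_inner_common[OF assms(1-3) \<open>s < t\<close> less.prems(1,2) True] by metis
    next
      case False
      then obtain h1 h2 where h: "bij_betw h1 {s..t} {s..t}" "bij_betw h2 {s..t} {s..t}"
        "k \<le> card (common h1 h2 {s..t})" "card (inner_common s t f1 f2) < card (inner_common s t h1 h2)"
        "assign_cost a h1 {s..t} \<le> assign_cost a f1 {s..t}" "assign_cost b h2 {s..t} \<le> assign_cost b f2 {s..t}"
        using inner_common_grow[OF assms(1-3) less.prems(1,2) _ less.prems(3) assms(4)] by (metis not_le)
      then have "k - card (inner_common s t h1 h2) < k - card (inner_common s t f1 f2)"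
        using False by linarith
      then show ?thesis
        using less.hyps h(1-3) h(5,6) by (meson order.trans)
    qed
  qed
  then show ?thesis
    using that by blast
qed

definition extend_id :: "nat set \<Rightarrow> (nat \<Rightarrow> nat) \<Rightarrow> nat \<Rightarrow> nat" where
  "extend_id J P i = (if i \<in> J then P i else i)"

definition extend_reflect :: "nat \<Rightarrow> nat set \<Rightarrow> (nat \<Rightarrow> nat) \<Rightarrow> nat \<Rightarrow> nat" where
  "extend_reflect r J P i = (if i \<in> J then P i else r - i)"

lemma bij_betw_eq_if_card_common:
  assumes "finite S" "bij_betw f1 S T" "bij_betw f2 S T" "card S \<le> card (common f1 f2 S) + 1" "i \<in> S"
  shows "f1 i = f2 i"
proof (rule ccontr)
  assume ne: "f1 i \<noteq> f2 i"
  have "f1 i \<in> f2 ` S"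
    using assms(2,3,5) by (auto simp: bij_betw_def)
  then obtain j where j: "j \<in> S" "f2 j = f1 i"
    by auto
  have "i \<noteq> j" "f1 j \<noteq> f2 j"
    using j ne assms(2,5) inj_onD[of f1 S j i] by (auto simp: bij_betw_def)
  then have "common f1 f2 S \<subseteq> S - {i, j}"
    using ne unfolding common_def by auto
  moreover have "card (S - {i, j}) + 2 = card S"
    using card_Diff_subset[of "{i, j}" S] card_mono[OF assms(1), of "{i, j}"] assms(5) j(1) \<open>i \<noteq> j\<close>
    by auto
  ultimately show False
    using card_mono[OF finite_Diff[OF assms(1)], of "common f1 f2 S" "{i, j}"] assms(4) by simp
qed

lemma peeled_pair_inner:
  fixes s t :: nat
  assumes "s < t" "bij_betw g1 {s..t} {s..t}" "bij_betw g2 {s..t} {s..t}" "g1 s = s" "g1 t = t" "g2 s = t" "g2 t = s"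
  shows "bij_betw g1 {Suc s..t - 1} {Suc s..t - 1}" "bij_betw g2 {Suc s..t - 1} {Suc s..t - 1}"
    "common g1 g2 {Suc s..t - 1} = common g1 g2 {s..t}"
proof -
  have I: "{s..t} - {s, t} = {Suc s..t - 1}"
    using assms(1) by auto
  have "bij_betw g1 {s, t} {s, t}" "bij_betw g2 {s, t} {s, t}"
    using assms(1,4-7) by (auto simp: bij_betw_def)
  then show "bij_betw g1 {Suc s..t - 1} {Suc s..t - 1}" "bij_betw g2 {Suc s..t - 1} {Suc s..t - 1}"
    unfolding I[symmetric] using assms(1) by (auto intro!: bij_betw_DiffI assms(2,3))
  show "common g1 g2 {Suc s..t - 1} = common g1 g2 {s..t}"
    using assms(1,4-7) unfolding I[symmetric] common_def by auto
qed

lemma peeled_pair_cost_extend: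
  fixes s t :: nat
  assumes "s < t" "J \<subseteq> {Suc s..t - 1}" "g1 s = s" "g1 t = t" "g2 s = t" "g2 t = s"
    "assign_cost a (extend_id J P) {Suc s..t - 1} \<le> assign_cost a g1 {Suc s..t - 1}"
    "assign_cost b (extend_reflect (s + t) J P) {Suc s..t - 1} \<le> assign_cost b g2 {Suc s..t - 1}"
  shows "assign_cost a (extend_id J P) {s..t} \<le> assign_cost a g1 {s..t}"
    "assign_cost b (extend_reflect (s + t) J P) {s..t} \<le> assign_cost b g2 {s..t}"
proof -
  have ext: "extend_id J P i = g1 i" "extend_reflect (s + t) J P i = g2 i"
    if "i \<in> {s..t} - {Suc s..t - 1}" for i
  proof -
    have "i = s \<or> i = t" "i \<notin> J"
      using that assms(2) by auto
    then show "extend_id J P i = g1 i" "extend_reflect (s + t) J P i = g2 i"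
      using assms(3-6) unfolding extend_id_def extend_reflect_def by auto
  qed
  have sub: "{Suc s..t - 1} \<subseteq> {s..t}"
    by auto
  show "assign_cost a (extend_id J P) {s..t} \<le> assign_cost a g1 {s..t}"
    by (rule assign_cost_le_modify[OF finite_atLeastAtMost sub _ assms(7)]) (erule ext(1))
  show "assign_cost b (extend_reflect (s + t) J P) {s..t} \<le> assign_cost b g2 {s..t}"
    by (rule assign_cost_le_modify[OF finite_atLeastAtMost sub _ assms(8)]) (erule ext(2))
qed

text \<open>After \<open>m\<close> layers at most \<open>k + 1\<close> rows remain, and on them the two bijections coincide.\<close>

lemma peel_layers:
  assumes "monge_on U a" "anti_monge_on U b" "{s..t} \<subseteq> U"
    "k + 2 * m \<le> card {s..t}" "card {s..t} \<le> k + 2 * m + 1"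
    "bij_betw f1 {s..t} {s..t}" "bij_betw f2 {s..t} {s..t}" "k \<le> card (common f1 f2 {s..t})"
  shows "\<exists>P. bij_betw P {s + m..t - m} {s + m..t - m} \<and>
    assign_cost a (extend_id {s + m..t - m} P) {s..t} \<le> assign_cost a f1 {s..t} \<and>
    assign_cost b (extend_reflect (s + t) {s + m..t - m} P) {s..t} \<le> assign_cost b f2 {s..t}"
  using assms(3-8)
proof (induction m arbitrary: s t f1 f2)
  case 0
  have "f1 i = f2 i" if "i \<in> {s..t}" for i
    using bij_betw_eq_if_card_common[OF _ "0.prems"(4,5)] "0.prems"(3,6) that by simp
  then show ?case
    using "0.prems"(4) by (intro exI[of _ f1]) (simp add: extend_id_def extend_reflect_def assign_cost_def)
next
  case (Suc m)
  obtain g1 g2 where g: "bij_betw g1 {s..t} {s..t}" "bij_betw g2 {s..t} {s..t}"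
    "k \<le> card (common g1 g2 {s..t})" "g1 s = s" "g1 t = t" "g2 s = t" "g2 t = s"
    "assign_cost a g1 {s..t} \<le> assign_cost a f1 {s..t}" "assign_cost b g2 {s..t} \<le> assign_cost b f2 {s..t}"
    using peel_outer_layer[OF assms(1,2) Suc.prems(1) _ Suc.prems(4-6)] Suc.prems(2) by auto
  have "s < t"
    using Suc.prems(2) by simp
  note inner = peeled_pair_inner[OF \<open>s < t\<close> g(1,2,4-7)]
  have "{Suc s..t - 1} \<subseteq> {s..t}"
    by auto
  then have "{Suc s..t - 1} \<subseteq> U"
    using Suc.prems(1) by (rule subset_trans)
  moreover have "k + 2 * m \<le> card {Suc s..t - 1}" "card {Suc s..t - 1} \<le> k + 2 * m + 1"
    using Suc.prems(2,3) by auto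
  ultimately obtain P where P: "bij_betw P {Suc s + m..t - 1 - m} {Suc s + m..t - 1 - m}"
    "assign_cost a (extend_id {Suc s + m..t - 1 - m} P) {Suc s..t - 1} \<le> assign_cost a g1 {Suc s..t - 1}"
    "assign_cost b (extend_reflect (Suc s + (t - 1)) {Suc s + m..t - 1 - m} P) {Suc s..t - 1}
      \<le> assign_cost b g2 {Suc s..t - 1}"
    using Suc.IH inner g(3) by metis
  have J: "{Suc s + m..t - 1 - m} = {s + Suc m..t - Suc m}" "Suc s + (t - 1) = s + t"
    "{s + Suc m..t - Suc m} \<subseteq> {Suc s..t - 1}"
    using \<open>s < t\<close> by auto
  note cost = peeled_pair_cost_extend[OF \<open>s < t\<close> J(3) g(4-7) P(2,3)[unfolded J(1,2)]]
  show ?case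
    using P(1) cost g(8,9) unfolding J(1) by (meson order.trans)
qed

section \<open>Optimal solutions of RecovAP\<close>

lemma canonical_pair:
  assumes "bij_betw P J J" "J = {s + m..t - m}" "2 * m \<le> card {s..t}"
  shows "bij_betw (extend_id J P) {s..t} {s..t}"
    and "bij_betw (extend_reflect (s + t) J P) {s..t} {s..t}"
    and "common (extend_id J P) (extend_reflect (s + t) J P) {s..t} = J"
proof -
  have J: "J \<subseteq> {s..t}" "J \<union> ({s..t} - J) = {s..t}" "J \<inter> ({s..t} - J) = {}"
    using assms(2) by auto
  have "bij_betw (\<lambda>i. i) ({s..t} - J) ({s..t} - J)"
    by (simp add: bij_betw_def)
  from bij_betw_disjoint_Un[OF assms(1) this J(3) J(3), unfolded J(2)]
  show "bij_betw (extend_id J P) {s..t} {s..t}"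
    unfolding extend_id_def[abs_def] .
  have "bij_betw (\<lambda>i. s + t - i) ({s..t} - J) ({s..t} - J)"
    by (rule bij_betw_byWitness[where f' = "\<lambda>i. s + t - i"]) (auto simp: assms(2))
  from bij_betw_disjoint_Un[OF assms(1) this J(3) J(3), unfolded J(2)]
  show "bij_betw (extend_reflect (s + t) J P) {s..t} {s..t}"
    unfolding extend_reflect_def[abs_def] .
  have "i \<noteq> s + t - i" if "i \<in> {s..t} - J" for i
    using that assms(2,3) by auto
  then show "common (extend_id J P) (extend_reflect (s + t) J P) {s..t} = J"
    using J(1) unfolding common_def extend_id_def extend_reflect_def by auto
qed

lemma assign_cost_extend_le:
  assumes "finite S" "J \<subseteq> S"
    "assign_cost (\<lambda>i j. a i j + b i j) P J \<le> assign_cost (\<lambda>i j. a i j + b i j) Q J"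
  shows "assign_cost a (extend_id J P) S + assign_cost b (extend_reflect r J P) S
    \<le> assign_cost a (extend_id J Q) S + assign_cost b (extend_reflect r J Q) S"
proof -
  have "assign_cost a (extend_id J P) S - assign_cost a (extend_id J Q) S
      = assign_cost a (extend_id J P) J - assign_cost a (extend_id J Q) J"
    by (rule assign_cost_modify[OF assms(1,2)]) (simp add: extend_id_def)
  moreover have "assign_cost b (extend_reflect r J P) S - assign_cost b (extend_reflect r J Q) S
      = assign_cost b (extend_reflect r J P) J - assign_cost b (extend_reflect r J Q) J"
    by (rule assign_cost_modify[OF assms(1,2)]) (simp add: extend_reflect_def)
  moreover have "assign_cost c (extend_id J f) J = assign_cost c f J"
    "assign_cost c (extend_reflect r J f) J = assign_cost c f J" for c f
    unfolding assign_cost_def extend_id_def extend_reflect_def by simp_all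
  moreover have "assign_cost (\<lambda>i j. a i j + b i j) f J = assign_cost a f J + assign_cost b f J" for f
    unfolding assign_cost_def by (rule sum.distrib)
  ultimately show ?thesis
    using assms(3) by simp
qed

lemma recov_feasible_lower_bound:
  assumes "monge n a" "anti_monge n b" "recov_feasible n k N1 N2" "k + 2 * m \<le> n" "n \<le> k + 2 * m + 1"
  obtains P where "bij_betw P {1 + m..n - m} {1 + m..n - m}"
    "assign_cost a (extend_id {1 + m..n - m} P) {1..n} + assign_cost b (extend_reflect (1 + n) {1 + m..n - m} P) {1..n}
      \<le> cost a N1 + cost b N2"
proof -
  have N: "perfect_matching n N1" "perfect_matching n N2" "k \<le> card (N1 \<inter> N2)"
    using assms(3) unfolding recov_feasible_def by auto
  obtain f1 where f1: "bij_betw f1 {1..n} {1..n}" "N1 = graph f1 {1..n}"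
    using perfect_matching_on_obtain_bij[OF N(1)] .
  obtain f2 where f2: "bij_betw f2 {1..n} {1..n}" "N2 = graph f2 {1..n}"
    using perfect_matching_on_obtain_bij[OF N(2)] .
  have "k \<le> card (common f1 f2 {1..n})"
    using N(3) unfolding f1(2) f2(2) graph_Int_graph card_graph .
  then obtain P where P: "bij_betw P {1 + m..n - m} {1 + m..n - m}"
    "assign_cost a (extend_id {1 + m..n - m} P) {1..n} \<le> assign_cost a f1 {1..n}"
    "assign_cost b (extend_reflect (1 + n) {1 + m..n - m} P) {1..n} \<le> assign_cost b f2 {1..n}"
    using peel_layers[OF monge_imp_monge_on[OF assms(1)] anti_monge_imp_anti_monge_on[OF assms(2)] order.refl
        _ _ f1(1) f2(1)] assms(4,5) by auto
  show ?thesis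
    using that[OF P(1)] P(2,3) unfolding f1(2) f2(2) cost_graph by simp
qed

lemma canonical_pair_feasible:
  assumes "bij_betw P J J" "J = {1 + m..n - m}" "k + 2 * m \<le> n"
  shows "recov_feasible n k (graph (extend_id J P) {1..n}) (graph (extend_reflect (1 + n) J P) {1..n})"
    and "graph (extend_id J P) {1..n} \<inter> graph (extend_reflect (1 + n) J P) {1..n} = graph P J"
proof -
  have "2 * m \<le> card {1..n}"
    using assms(3) by simp
  note pair = canonical_pair[OF assms(1,2) this]
  show Int: "graph (extend_id J P) {1..n} \<inter> graph (extend_reflect (1 + n) J P) {1..n} = graph P J"
    unfolding graph_Int_graph pair(3) by (auto simp: graph_def extend_id_def)
  show "recov_feasible n k (graph (extend_id J P) {1..n}) (graph (extend_reflect (1 + n) J P) {1..n})"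
    unfolding recov_feasible_def Int card_graph
    using perfect_matching_on_graph[OF pair(1)] perfect_matching_on_graph[OF pair(2)] assms(2,3) by auto
qed

lemma canonical_pair_optimal:
  assumes "monge n a" "anti_monge n b" "k + 2 * m \<le> n" "n \<le> k + 2 * m + 1" "J = {1 + m..n - m}"
    "bij_betw P0 J J" "optimal_assignment J J (\<lambda>i j. a i j + b i j) (graph P0 J)"
  shows "recov_optimal n k a b (graph (extend_id J P0) {1..n}) (graph (extend_reflect (1 + n) J P0) {1..n})"
  unfolding recov_optimal_def
proof (intro conjI allI impI)
  show "recov_feasible n k (graph (extend_id J P0) {1..n}) (graph (extend_reflect (1 + n) J P0) {1..n})"
    using canonical_pair_feasible(1)[OF assms(6,5,3)] .
  fix N1 N2
  assume "recov_feasible n k N1 N2"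
  then obtain P where P: "bij_betw P J J"
    "assign_cost a (extend_id J P) {1..n} + assign_cost b (extend_reflect (1 + n) J P) {1..n}
      \<le> cost a N1 + cost b N2"
    using recov_feasible_lower_bound[OF assms(1,2) _ assms(3,4)] unfolding assms(5)[symmetric] by blast
  have "cost (\<lambda>i j. a i j + b i j) (graph P0 J) \<le> cost (\<lambda>i j. a i j + b i j) (graph P J)"
    using assms(7) perfect_matching_on_graph[OF P(1)] unfolding optimal_assignment_def by blast
  moreover have "J \<subseteq> {1..n}"
    using assms(5) by auto
  ultimately have "assign_cost a (extend_id J P0) {1..n} + assign_cost b (extend_reflect (1 + n) J P0) {1..n}
      \<le> assign_cost a (extend_id J P) {1..n} + assign_cost b (extend_reflect (1 + n) J P) {1..n}"
    using assign_cost_extend_le[OF finite_atLeastAtMost] unfolding cost_graph by blast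
  then show "cost a (graph (extend_id J P0) {1..n}) + cost b (graph (extend_reflect (1 + n) J P0) {1..n})
      \<le> cost a N1 + cost b N2"
    using P(2) unfolding cost_graph by linarith
qed

lemma graph_extend_outside:
  assumes "i \<in> S" "i \<notin> J"
  shows "(i, i) \<in> graph (extend_id J P) S" "(i, r - i) \<in> graph (extend_reflect r J P) S"
  using assms unfolding graph_def extend_id_def extend_reflect_def by (auto intro!: rev_image_eqI[of i])

theorem theorem6:
  fixes n k :: nat and a b :: "nat \<Rightarrow> nat \<Rightarrow> real"
  assumes "k \<le> n" and "monge n a" and "anti_monge n b"
  defines "m \<equiv> (n - k) div 2"
  defines "I \<equiv> {1..m} \<union> {n + 1 - m..n}"
  shows "\<exists>M1 M2. recov_optimal n k a b M1 M2 \<and>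
           (\<forall>i\<in>I. (i, i) \<in> M1) \<and>
           (\<forall>i\<in>I. (i, n + 1 - i) \<in> M2) \<and>
           optimal_assignment {m + 1..n - m} {m + 1..n - m} (\<lambda>i j. a i j + b i j) (M1 \<inter> M2)"
proof -
  define J where "J = {m + 1..n - m}"
  have size: "k + 2 * m \<le> n" "n \<le> k + 2 * m + 1" "J = {1 + m..n - m}"
    using assms(1) unfolding m_def J_def by auto
  have "finite J"
    unfolding J_def by simp
  then obtain M0 where M0: "optimal_assignment J J (\<lambda>i j. a i j + b i j) M0"
    using optimal_assignment_exists[OF _ bij_betw_id] by blast
  then obtain P0 where P0: "bij_betw P0 J J" "M0 = graph P0 J"
    unfolding optimal_assignment_def using perfect_matching_on_obtain_bij by blast
  define M1 where "M1 = graph (extend_id J P0) {1..n}"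
  define M2 where "M2 = graph (extend_reflect (1 + n) J P0) {1..n}"
  have "recov_optimal n k a b M1 M2"
    unfolding M1_def M2_def using canonical_pair_optimal[OF assms(2,3) size P0(1)] M0 P0(2) by blast
  moreover have "M1 \<inter> M2 = M0"
    unfolding M1_def M2_def P0(2) using canonical_pair_feasible(2)[OF P0(1) size(3,1)] .
  moreover have "(i, i) \<in> M1" "(i, n + 1 - i) \<in> M2" if "i \<in> I" for i
  proof -
    have "i \<in> {1..n}" "i \<notin> J"
      using that size(1) unfolding I_def J_def by auto
    then show "(i, i) \<in> M1" "(i, n + 1 - i) \<in> M2"
      unfolding M1_def M2_def using graph_extend_outside by auto
  qed
  ultimately show ?thesis
    using M0 unfolding J_def by blast
qed

end
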